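(* Let $A$ be an $n \times n$ real symmetric matrix and let $\alpha \subseteq \{1,2,\dots,n\}$ with $|\alpha| \geq 2$. Then $\alpha$ is a P-set of $A$ if and only if every subset $\gamma \subseteq \alpha$ with $|\gamma| = 2$ is a P-set of $A$.
   Context: All matrices are real. For an $n\times n$ matrix $A$ and $\alpha \subseteq \{1,\dots,n\}$, $A(\alpha)$ denotes the principal submatrix obtained by deleting the rows and columns indexed by $\alpha$, and $\nu(A)$ denotes the nullity of $A$. A set $\alpha$ is a P-set of $A$ if $\nu(A(\alpha)) = \nu(A) + |\alpha|$. *)

theory Defs
  imports "Jordan_Normal_Form.Matrix_Kernel" "Jordan_Normal_Form.DL_Submatrix"
begin

(* Indices are 0-based: an n x n matrix has index set {0..<n}. *)

definition principal_delete :: "real mat \<Rightarrow> nat set \<Rightarrow> real mat" where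
  "principal_delete A \<alpha> = submatrix A (- \<alpha>) (- \<alpha>)"

definition nullity :: "real mat \<Rightarrow> nat" where
  "nullity A = kernel_dim A"

definition P_set :: "real mat \<Rightarrow> nat set \<Rightarrow> bool" where
  "P_set A \<alpha> \<longleftrightarrow> nullity (principal_delete A \<alpha>) = nullity A + card \<alpha>"

end

theory Submission
  imports Defs "HOL-Library.Function_Algebras"
begin

text \<open>
  Let \<open>N\<close> be the kernel of \<open>A\<close> and \<open>Z\<close> the kernel of \<open>A(\<alpha>)\<close>, padded with zeros at \<open>\<alpha>\<close> so that
  both live in \<open>\<real>\<^sup>n\<close>. Multiplication by \<open>A\<close> maps \<open>Z\<close> into the span of the unit vectors
  \<open>e\<^sub>i\<close>, \<open>i \<in> \<alpha>\<close>, with kernel \<open>Z \<inter> N\<close>; so rank--nullity gives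
  \<open>\<nu>(A(\<alpha>)) \<le> \<nu>(A) + |\<alpha>|\<close>, with equality iff \<open>N \<subseteq> Z\<close> and every \<open>e\<^sub>i\<close> is the image of
  some \<open>z \<in> Z\<close>. That in turn holds iff for all \<open>i, j \<in> \<alpha>\<close> the system \<open>A y = e\<^sub>i\<close> is
  solvable and all its solutions vanish at \<open>j\<close>: a condition on pairs \<open>(i, j)\<close>.
\<close>

context vector_space
begin

lemma span_inter_span_eq_zero:
  assumes indep: "independent (S \<union> T)" and disj: "S \<inter> T = {}"
  shows "span S \<inter> span T = {0}"
proof (intro subset_antisym subsetI)
  fix x assume x: "x \<in> span S \<inter> span T"
  have "representation (S \<union> T) x = representation S x"
    "representation (S \<union> T) x = representation T x"
    using x indep by (auto intro: representation_extend)
  then have rep_0: "representation (S \<union> T) x b = 0" for b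
    using disj representation_ne_zero[of S x b] representation_ne_zero[of T x b] by auto
  have "x \<in> span (S \<union> T)"
    using x span_mono[of S "S \<union> T"] by blast
  then have "x = (\<Sum>b | representation (S \<union> T) x b \<noteq> 0. representation (S \<union> T) x b *s b)"
    using sum_nonzero_representation_eq[OF indep] by simp
  also have "\<dots> = 0"
    by (simp add: rep_0)
  finally show "x \<in> {0}" by simp
qed (simp add: span_zero)

lemma dim_subset_span_finite:
  assumes "U \<subseteq> V" "V \<subseteq> span W" "finite W"
  shows "dim U \<le> dim V"
proof -
  obtain B where B: "B \<subseteq> V" "independent B" "V \<subseteq> span B" "card B = dim V"
    by (rule basis_exists)
  have "finite B"
    using independent_span_bound[OF \<open>finite W\<close> B(2)] B(1) assms(2) by blast
  then show ?thesis
    using dim_le_card[of U B] assms(1) B(3,4) by auto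
qed

lemma subset_subspace_if_dim_le:
  assumes U: "subspace U" and UV: "U \<subseteq> V" and VW: "V \<subseteq> span W" "finite W"
    and le: "dim V \<le> dim U"
  shows "V \<subseteq> U"
proof
  fix v assume v: "v \<in> V"
  obtain B where B: "B \<subseteq> U" "independent B" "U \<subseteq> span B" "card B = dim U"
    by (rule basis_exists)
  obtain C where C: "C \<subseteq> V" "independent C" "V \<subseteq> span C" "card C = dim V"
    by (rule basis_exists)
  have finC: "finite C"
    using independent_span_bound[OF VW(2) C(2)] C(1) VW(1) by blast
  have finB: "finite B"
    using independent_span_bound[OF finC B(2)] B(1) UV C(3) by blast
  show "v \<in> U"
  proof (rule ccontr)
    assume "v \<notin> U"
    then have "v \<notin> span B"
      using span_minimal[OF B(1) U] by blast
    then have "independent (insert v B)" and "v \<notin> B"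
      using independent_insertI[OF _ B(2)] span_base[of v B] by auto
    moreover have "insert v B \<subseteq> span C"
      using B(1) UV C(3) v by blast
    ultimately have "card (insert v B) \<le> card C"
      using independent_span_bound[OF finC] by blast
    then show False
      using finB \<open>v \<notin> B\<close> B(4) C(4) le by simp
  qed
qed

end

context vector_space_pair
begin

lemma linear_image_span_Un_subset:
  assumes f: "Vector_Spaces.linear s1 s2 f" and S: "\<And>x. x \<in> S \<Longrightarrow> f x = 0"
  shows "f ` vs1.span (S \<union> T) \<subseteq> vs2.span (f ` T)"
proof
  fix z assume "z \<in> f ` vs1.span (S \<union> T)"
  then obtain x where x: "x \<in> vs1.span (S \<union> T)" "z = f x"
    by blast
  then obtain u v where uv: "u \<in> vs1.span S" "v \<in> vs1.span T" "x = u + v"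
    unfolding vs1.span_Un by blast
  have "f u = 0"
    by (rule linear_eq_0_on_span[OF f S uv(1)])
  then have "z = f v"
    using x(2) uv(3) linear_add[OF f] by simp
  then show "z \<in> vs2.span (f ` T)"
    using uv(2) linear_span_image[OF f] by blast
qed

lemma dim_kernel_add_dim_image:
  assumes f: "Vector_Spaces.linear s1 s2 f" and Z: "vs1.subspace Z"
    and fin: "finite W" "Z \<subseteq> vs1.span W"
  shows "vs1.dim {x \<in> Z. f x = 0} + vs2.dim (f ` Z) = vs1.dim Z"
proof -
  define K where "K = {x \<in> Z. f x = 0}"
  have K: "vs1.subspace K"
    using vs1.subspace_inter[OF Z linear_subspace_kernel[OF f]]
    by (simp add: K_def Collect_conj_eq)
  obtain BK where BK: "BK \<subseteq> K" "vs1.independent BK" "K \<subseteq> vs1.span BK" "card BK = vs1.dim K"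
    by (rule vs1.basis_exists)
  obtain B where B: "BK \<subseteq> B" "B \<subseteq> Z" "vs1.independent B" "Z \<subseteq> vs1.span B"
    using vs1.maximal_independent_subset_extend[of BK Z] BK(1,2) by (auto simp: K_def)
  have finB: "finite B"
    using vs1.independent_span_bound[OF fin(1) B(3)] B(2) fin(2) by blast
  define C where "C = B - BK"
  have B_split: "B = BK \<union> C" "BK \<inter> C = {}"
    using B(1) by (auto simp: C_def)
  have dim_Z: "vs1.dim Z = card BK + card C"
    using vs1.dim_unique[OF B(2,4,3) refl] B_split finB
    by (metis card_Un_disjoint finite_Un)
  have "vs1.span C \<subseteq> Z"
    using B(2) by (intro vs1.span_minimal Z) (auto simp: C_def)
  then have inj: "inj_on f (vs1.span C)"
    using vs1.span_inter_span_eq_zero[of BK C] B(3) B_split BK(3)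
    unfolding linear_inj_on_iff_eq_0[OF f vs1.subspace_span] by (auto simp: K_def)
  have "f ` Z \<subseteq> vs2.span (f ` C)"
    using linear_image_span_Un_subset[OF f, of BK C] B(4) B_split BK(1)
    by (auto simp: K_def)
  then have "vs2.dim (f ` Z) = card C"
  proof (rule vs2.dim_unique[rotated])
    show "f ` C \<subseteq> f ` Z" using B(2) by (auto simp: C_def)
    show "vs2.independent (f ` C)"
      using linear_independent_injective_image[OF f _ inj] B(3) vs1.independent_mono
      by (auto simp: C_def)
    show "card (f ` C) = card C"
      using card_image inj_on_subset[OF inj vs1.span_superset] by blast
  qed
  then show ?thesis
    using dim_Z BK(4) by (simp add: K_def)
qed

end

definition scale_fun :: "real \<Rightarrow> (nat \<Rightarrow> real) \<Rightarrow> nat \<Rightarrow> real" where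
  "scale_fun c f = (\<lambda>i. c * f i)"

interpretation fs: vector_space scale_fun
  by unfold_locales (auto simp: scale_fun_def algebra_simps fun_eq_iff)

interpretation fs_pair: vector_space_pair scale_fun scale_fun ..

lemma scale_fun_apply [simp]: "scale_fun c f i = c * f i"
  by (simp add: scale_fun_def)

lemma sum_fun_apply: "(\<Sum>x\<in>S. f x) i = (\<Sum>x\<in>S. f x i)" for f :: "'a \<Rightarrow> nat \<Rightarrow> real"
  by (induct S rule: infinite_finite_induct) auto

definition funs_below :: "nat \<Rightarrow> (nat \<Rightarrow> real) set" where
  "funs_below n = {f. \<forall>i\<ge>n. f i = 0}"

definition unit_fun :: "nat \<Rightarrow> nat \<Rightarrow> real" where
  "unit_fun i = (\<lambda>j. if j = i then 1 else 0)"

definition mult_mat_fun :: "real mat \<Rightarrow> (nat \<Rightarrow> real) \<Rightarrow> nat \<Rightarrow> real" where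
  "mult_mat_fun A f = (\<lambda>i. if i < dim_row A then \<Sum>j<dim_col A. A $$ (i, j) * f j else 0)"

text \<open>Vectors of \<open>\<real>\<^sup>n\<close> are functions \<open>nat \<Rightarrow> real\<close> vanishing from \<open>n\<close> on. The kernel of
  \<open>A(\<alpha>)\<close> is represented in the coordinates of \<open>A\<close>, with zeros at the deleted indices.\<close>

definition padded_kernel :: "real mat \<Rightarrow> nat set \<Rightarrow> (nat \<Rightarrow> real) set" where
  "padded_kernel A \<alpha> = {f \<in> funs_below (dim_col A).
     (\<forall>i\<in>\<alpha>. f i = 0) \<and> (\<forall>i. i \<notin> \<alpha> \<longrightarrow> mult_mat_fun A f i = 0)}"

lemma mult_mat_fun_add: "mult_mat_fun A (f + g) = mult_mat_fun A f + mult_mat_fun A g"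
  by (simp add: mult_mat_fun_def fun_eq_iff distrib_left sum.distrib)

lemma mult_mat_fun_diff: "mult_mat_fun A (f - g) = mult_mat_fun A f - mult_mat_fun A g"
  by (simp add: mult_mat_fun_def fun_eq_iff right_diff_distrib sum_subtractf)

lemma mult_mat_fun_scale: "mult_mat_fun A (scale_fun c f) = scale_fun c (mult_mat_fun A f)"
  by (simp add: mult_mat_fun_def fun_eq_iff sum_distrib_left mult.left_commute)

lemma linear_mult_mat_fun: "Vector_Spaces.linear scale_fun scale_fun (mult_mat_fun A)"
  using fs.vector_space_axioms
  by (simp add: Vector_Spaces.linear_iff mult_mat_fun_add mult_mat_fun_scale)

lemma subspace_padded_kernel: "fs.subspace (padded_kernel A \<alpha>)"
  by (auto simp: fs.subspace_def padded_kernel_def funs_below_def mult_mat_fun_add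
      mult_mat_fun_scale) (simp add: mult_mat_fun_def)

lemma funs_below_subset_span: "funs_below n \<subseteq> fs.span (unit_fun ` {..<n})"
proof
  fix f assume f: "f \<in> funs_below n"
  have "f = (\<Sum>i<n. scale_fun (f i) (unit_fun i))"
    using f by (auto simp: fun_eq_iff sum_fun_apply funs_below_def unit_fun_def if_distrib
        cong: if_cong)
  also have "\<dots> \<in> fs.span (unit_fun ` {..<n})"
    by (intro fs.span_sum fs.span_scale fs.span_base) auto
  finally show "f \<in> fs.span (unit_fun ` {..<n})" .
qed

lemma independent_unit_fun: "fs.independent (unit_fun ` S)"
proof
  assume "fs.dependent (unit_fun ` S)"
  then obtain T u v where T: "finite T" "T \<subseteq> unit_fun ` S"
    and v: "v \<in> T" "u v \<noteq> 0" and sum_0: "(\<Sum>w\<in>T. scale_fun (u w) w) = 0"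
    unfolding fs.dependent_explicit by blast
  obtain i where i: "v = unit_fun i" using T(2) v(1) by blast
  have "(\<Sum>w\<in>T. u w * w i) = u v * v i + (\<Sum>w\<in>T - {v}. u w * w i)"
    using T(1) v(1) by (rule sum.remove)
  also have "(\<Sum>w\<in>T - {v}. u w * w i) = 0"
  proof (intro sum.neutral ballI)
    fix w assume w: "w \<in> T - {v}"
    then obtain j where "w = unit_fun j" using T(2) by blast
    then show "u w * w i = 0" using w i by (auto simp: unit_fun_def)
  qed
  finally have "(\<Sum>w\<in>T. u w * w i) = u v"
    using i by (simp add: unit_fun_def)
  then show False
    using fun_cong[OF sum_0, of i] v(2) by (simp add: sum_fun_apply)
qed

lemma inj_unit_fun: "inj unit_fun"
  by (rule injI) (metis unit_fun_def zero_neq_one)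

lemma mult_mat_fun_padded_kernel_in_span:
  assumes "z \<in> padded_kernel A \<alpha>" "finite \<alpha>"
  shows "mult_mat_fun A z \<in> fs.span (unit_fun ` \<alpha>)"
proof -
  have "mult_mat_fun A z = (\<Sum>i\<in>\<alpha>. scale_fun (mult_mat_fun A z i) (unit_fun i))"
    using assms by (auto simp: fun_eq_iff sum_fun_apply padded_kernel_def unit_fun_def if_distrib
        cong: if_cong)
  also have "\<dots> \<in> fs.span (unit_fun ` \<alpha>)"
    by (intro fs.span_sum fs.span_scale fs.span_base) auto
  finally show ?thesis .
qed

definition embed_vec :: "nat set \<Rightarrow> (nat \<Rightarrow> nat) \<Rightarrow> real vec \<Rightarrow> nat \<Rightarrow> real" where
  "embed_vec \<beta> h v = (\<lambda>i. if i \<in> \<beta> then v $ h i else 0)"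

lemma inj_on_embed_vec:
  assumes h: "bij_betw h \<beta> {..<c}"
  shows "inj_on (embed_vec \<beta> h) (carrier_vec c)"
proof (rule inj_onI)
  fix u v assume uv: "u \<in> carrier_vec c" "v \<in> carrier_vec c" "embed_vec \<beta> h u = embed_vec \<beta> h v"
  show "u = v"
  proof (rule eq_vecI)
    fix j assume "j < dim_vec v"
    then have "j \<in> h ` \<beta>"
      using uv(2) bij_betw_imp_surj_on[OF h] by auto
    then obtain i where "i \<in> \<beta>" "h i = j" by blast
    then show "u $ j = v $ j"
      using fun_cong[OF uv(3), of i] by (simp add: embed_vec_def)
  qed (use uv in auto)
qed

lemma dim_embed_vec_mat_kernel:
  assumes M: "M \<in> carrier_mat r c" and h: "bij_betw h \<beta> {..<c}"
  shows "fs.dim (embed_vec \<beta> h ` mat_kernel M) = kernel_dim M"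
proof -
  let ?g = "embed_vec \<beta> h"
  interpret K: kernel r c M by unfold_locales (rule M)
  obtain B where finB: "finite B" and B: "K.basis B"
    using kernel_basis_exists[OF M] by auto
  have B_ker: "B \<subseteq> mat_kernel M"
    using B unfolding K.Ker.basis_def by auto
  have inj_B: "inj_on ?g B"
    using inj_on_subset[OF inj_on_embed_vec[OF h]] B_ker mat_kernel_carrier[OF M] by blast
  have h_lt: "h i < c" if "i \<in> \<beta>" for i
    using h that by (auto dest: bij_betw_apply)
  have g_lincomb: "?g (K.lincomb a X) = (\<Sum>x\<in>X. scale_fun (a x) (?g x))"
    if "X \<subseteq> mat_kernel M" for a X
    by (rule ext) (simp add: embed_vec_def sum_fun_apply K.lincomb_index[OF _ that] h_lt)
  have kernel_span: "?g ` mat_kernel M \<subseteq> fs.span (?g ` B)"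
  proof
    fix w assume "w \<in> ?g ` mat_kernel M"
    then obtain v where v: "v \<in> mat_kernel M" "w = ?g v" by auto
    then have "v \<in> K.span B"
      using B unfolding K.Ker.basis_def by auto
    then obtain a X where X: "v = K.lincomb a X" "finite X" "X \<subseteq> B"
      unfolding K.Ker.span_def by auto
    have "w = (\<Sum>x\<in>X. scale_fun (a x) (?g x))"
      using X g_lincomb B_ker v(2) by auto
    also have "\<dots> \<in> fs.span (?g ` B)"
      using X(3) by (intro fs.span_sum fs.span_scale fs.span_base) auto
    finally show "w \<in> fs.span (?g ` B)" .
  qed
  have indep: "fs.independent (?g ` B)"
  proof
    assume "fs.dependent (?g ` B)"
    then obtain u where u: "\<exists>w\<in>?g ` B. u w \<noteq> 0" "(\<Sum>w\<in>?g ` B. scale_fun (u w) w) = 0"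
      using fs.dependent_finite finB by blast
    define a where "a = u \<circ> ?g"
    have "?g (K.lincomb a B) = 0"
      using u(2) g_lincomb[OF B_ker] by (simp add: sum.reindex[OF inj_B] a_def)
    moreover have "?g (0\<^sub>v c) = 0"
      by (auto simp: embed_vec_def h_lt)
    moreover have "K.lincomb a B \<in> carrier_vec c"
      using K.Ker.lincomb_closed B_ker mat_kernel_carrier[OF M] by auto
    ultimately have "K.lincomb a B = 0\<^sub>v c"
      using inj_onD[OF inj_on_embed_vec[OF h]] by simp
    moreover obtain x where "x \<in> B" "a x \<noteq> 0"
      using u(1) by (auto simp: a_def)
    ultimately have "K.lin_dep B"
      unfolding K.Ker.lin_dep_def using finB by auto
    then show False
      using B unfolding K.Ker.basis_def by auto
  qed
  have "fs.dim (?g ` mat_kernel M) = card (?g ` B)"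
    by (rule fs.dim_unique[OF _ kernel_span indep refl]) (use B_ker in auto)
  also have "\<dots> = kernel_dim M"
    using card_image[OF inj_B] K.Ker.dim_basis[OF finB B] by simp
  finally show ?thesis .
qed

definition compl_rank :: "nat set \<Rightarrow> nat \<Rightarrow> nat" where
  "compl_rank \<alpha> i = card {a \<in> - \<alpha>. a < i}"

lemma pick_compl_inverse:
  fixes \<alpha> :: "nat set"
  assumes "finite \<alpha>"
  shows pick_compl_mem: "j < card ({..<n} - \<alpha>) \<Longrightarrow>
      pick (- \<alpha>) j \<in> {..<n} - \<alpha> \<and> compl_rank \<alpha> (pick (- \<alpha>) j) = j"
    and compl_rank_less: "i \<in> {..<n} - \<alpha> \<Longrightarrow>
      compl_rank \<alpha> i < card ({..<n} - \<alpha>) \<and> pick (- \<alpha>) (compl_rank \<alpha> i) = i"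
proof -
  have inf: "infinite (- \<alpha>)"
    using assms finite_compl infinite_UNIV_nat by blast
  have below: "{..<n} - \<alpha> = {a \<in> - \<alpha>. a < n}" by auto
  assume j: "j < card ({..<n} - \<alpha>)"
  have rank_j: "compl_rank \<alpha> (pick (- \<alpha>) j) = j"
    unfolding compl_rank_def using card_pick inf by blast
  have "pick (- \<alpha>) j < n"
  proof (rule ccontr)
    assume "\<not> pick (- \<alpha>) j < n"
    then have "card {a \<in> - \<alpha>. a < n} \<le> compl_rank \<alpha> (pick (- \<alpha>) j)"
      unfolding compl_rank_def by (intro card_mono) auto
    then show False using j rank_j below by simp
  qed
  then show "pick (- \<alpha>) j \<in> {..<n} - \<alpha> \<and> compl_rank \<alpha> (pick (- \<alpha>) j) = j"
    using pick_in_set inf rank_j by auto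
next
  assume i: "i \<in> {..<n} - \<alpha>"
  have "{a \<in> - \<alpha>. a < i} \<subset> {..<n} - \<alpha>"
    using i by auto
  then show "compl_rank \<alpha> i < card ({..<n} - \<alpha>) \<and> pick (- \<alpha>) (compl_rank \<alpha> i) = i"
    unfolding compl_rank_def using i pick_card_in_set[of i "- \<alpha>"] by (auto intro: psubset_card_mono)
qed

lemma bij_betw_pick_compl:
  "finite \<alpha> \<Longrightarrow> bij_betw (pick (- \<alpha>)) {..<card ({..<n} - \<alpha>)} ({..<n} - \<alpha>)"
  by (rule bij_betw_byWitness[where f' = "compl_rank \<alpha>"])
    (use pick_compl_mem[of \<alpha> _ n] compl_rank_less[of \<alpha> _ n] in auto)

lemma bij_betw_compl_rank:
  "finite \<alpha> \<Longrightarrow> bij_betw (compl_rank \<alpha>) ({..<n} - \<alpha>) {..<card ({..<n} - \<alpha>)}"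
  by (rule bij_betw_byWitness[where f' = "pick (- \<alpha>)"])
    (use pick_compl_mem[of \<alpha> _ n] compl_rank_less[of \<alpha> _ n] in auto)

lemma principal_delete_dims:
  assumes "A \<in> carrier_mat n n"
  shows "dim_row (principal_delete A \<alpha>) = card ({..<n} - \<alpha>)"
    and "dim_col (principal_delete A \<alpha>) = card ({..<n} - \<alpha>)"
proof -
  have "{i. i < n \<and> i \<in> - \<alpha>} = {..<n} - \<alpha>" by auto
  then show "dim_row (principal_delete A \<alpha>) = card ({..<n} - \<alpha>)"
    "dim_col (principal_delete A \<alpha>) = card ({..<n} - \<alpha>)"
    using assms unfolding principal_delete_def dim_submatrix by simp_all
qed

lemma principal_delete_carrier:
  assumes "A \<in> carrier_mat n n"
  shows "principal_delete A \<alpha> \<in> carrier_mat (card ({..<n} - \<alpha>)) (card ({..<n} - \<alpha>))"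
  using principal_delete_dims[OF assms] by (rule carrier_matI)

lemma principal_delete_index:
  assumes "A \<in> carrier_mat n n" "i < card ({..<n} - \<alpha>)" "j < card ({..<n} - \<alpha>)"
  shows "principal_delete A \<alpha> $$ (i, j) = A $$ (pick (- \<alpha>) i, pick (- \<alpha>) j)"
  using submatrix_index[of i A "- \<alpha>" j "- \<alpha>"] principal_delete_dims[OF assms(1), of \<alpha>] assms(2,3)
  unfolding principal_delete_def dim_submatrix by simp

lemma principal_delete_mult_vec_index:
  assumes A: "A \<in> carrier_mat n n" and \<alpha>: "finite \<alpha>"
    and v: "v \<in> carrier_vec (card ({..<n} - \<alpha>))" and i: "i < card ({..<n} - \<alpha>)"
  shows "(principal_delete A \<alpha> *\<^sub>v v) $ i
    = mult_mat_fun A (embed_vec ({..<n} - \<alpha>) (compl_rank \<alpha>) v) (pick (- \<alpha>) i)"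
proof -
  let ?m = "card ({..<n} - \<alpha>)" and ?g = "embed_vec ({..<n} - \<alpha>) (compl_rank \<alpha>) v"
    and ?p = "pick (- \<alpha>)"
  have "(principal_delete A \<alpha> *\<^sub>v v) $ i = (\<Sum>j<?m. principal_delete A \<alpha> $$ (i, j) * v $ j)"
    using principal_delete_carrier[OF A, of \<alpha>] v i by (simp add: scalar_prod_def lessThan_atLeast0)
  also have "\<dots> = (\<Sum>j<?m. A $$ (?p i, ?p j) * ?g (?p j))"
    using i pick_compl_mem[OF \<alpha>]
    by (intro sum.cong refl) (simp add: principal_delete_index[OF A] embed_vec_def)
  also have "\<dots> = (\<Sum>j\<in>{..<n} - \<alpha>. A $$ (?p i, j) * ?g j)"
    by (rule sum.reindex_bij_betw[OF bij_betw_pick_compl[OF \<alpha>]])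
  also have "\<dots> = (\<Sum>j<n. A $$ (?p i, j) * ?g j)"
    by (rule sum.mono_neutral_left) (auto simp: embed_vec_def)
  also have "\<dots> = mult_mat_fun A ?g (?p i)"
    using A i pick_compl_mem[OF \<alpha>] by (auto simp: mult_mat_fun_def)
  finally show ?thesis .
qed

lemma embed_vec_restrict_padded_kernel:
  assumes A: "A \<in> carrier_mat n n" and \<alpha>: "finite \<alpha>" and f: "f \<in> padded_kernel A \<alpha>"
  shows "embed_vec ({..<n} - \<alpha>) (compl_rank \<alpha>) (vec (card ({..<n} - \<alpha>)) (\<lambda>j. f (pick (- \<alpha>) j))) = f"
proof
  fix i
  show "embed_vec ({..<n} - \<alpha>) (compl_rank \<alpha>) (vec (card ({..<n} - \<alpha>)) (\<lambda>j. f (pick (- \<alpha>) j))) i = f i"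
  proof (cases "i \<in> {..<n} - \<alpha>")
    case True
    then show ?thesis using compl_rank_less[OF \<alpha> True] by (simp add: embed_vec_def)
  next
    case False
    then have "i \<in> \<alpha> \<or> n \<le> i" by auto
    then show ?thesis
      using f A False by (auto simp: embed_vec_def padded_kernel_def funs_below_def)
  qed
qed

lemma embed_vec_principal_delete_kernel:
  assumes A: "A \<in> carrier_mat n n" and \<alpha>: "finite \<alpha>"
  shows "embed_vec ({..<n} - \<alpha>) (compl_rank \<alpha>) ` mat_kernel (principal_delete A \<alpha>)
    = padded_kernel A \<alpha>"
proof -
  let ?M = "principal_delete A \<alpha>" and ?m = "card ({..<n} - \<alpha>)"
    and ?g = "embed_vec ({..<n} - \<alpha>) (compl_rank \<alpha>)"
  note M = principal_delete_carrier[OF A, of \<alpha>]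
  show ?thesis
  proof (intro subset_antisym subsetI)
    fix f assume "f \<in> ?g ` mat_kernel ?M"
    then obtain v where v: "v \<in> carrier_vec ?m" "?M *\<^sub>v v = 0\<^sub>v ?m" "f = ?g v"
      using M by (auto simp: mat_kernel_def)
    have "mult_mat_fun A f i = 0" if "i \<notin> \<alpha>" for i
    proof (cases "i < n")
      case True
      then have "i \<in> {..<n} - \<alpha>" using that by simp
      then show ?thesis
        using principal_delete_mult_vec_index[OF A \<alpha> v(1)] compl_rank_less[OF \<alpha>] v(2,3)
        by (metis index_zero_vec(1))
    qed (use A in \<open>simp add: mult_mat_fun_def\<close>)
    then show "f \<in> padded_kernel A \<alpha>"
      using v(3) A by (auto simp: padded_kernel_def funs_below_def embed_vec_def)
  next
    fix f assume f: "f \<in> padded_kernel A \<alpha>"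
    define v where "v = vec ?m (\<lambda>j. f (pick (- \<alpha>) j))"
    have v: "v \<in> carrier_vec ?m" by (simp add: v_def)
    have "?M *\<^sub>v v = 0\<^sub>v ?m"
    proof (rule eq_vecI)
      fix i assume "i < dim_vec (0\<^sub>v ?m :: real vec)"
      then have i: "i < ?m" by simp
      have "(?M *\<^sub>v v) $ i = mult_mat_fun A f (pick (- \<alpha>) i)"
        using principal_delete_mult_vec_index[OF A \<alpha> v i]
          embed_vec_restrict_padded_kernel[OF A \<alpha> f] by (simp add: v_def)
      also have "\<dots> = 0"
        using f pick_compl_mem[OF \<alpha> i] by (auto simp: padded_kernel_def)
      finally show "(?M *\<^sub>v v) $ i = 0\<^sub>v ?m $ i" using i by simp
    qed (use M in simp)
    then have "?g v \<in> ?g ` mat_kernel ?M"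
      using M v by (simp add: mat_kernel_def)
    then show "f \<in> ?g ` mat_kernel ?M"
      unfolding v_def embed_vec_restrict_padded_kernel[OF A \<alpha> f] .
  qed
qed

lemma nullity_principal_delete:
  assumes A: "A \<in> carrier_mat n n" and \<alpha>: "finite \<alpha>"
  shows "nullity (principal_delete A \<alpha>) = fs.dim (padded_kernel A \<alpha>)"
  using dim_embed_vec_mat_kernel[OF principal_delete_carrier[OF A] bij_betw_compl_rank[OF \<alpha>]]
  unfolding nullity_def embed_vec_principal_delete_kernel[OF A \<alpha>] by simp

lemma principal_delete_empty: "principal_delete A {} = A"
  by (rule eq_matI) (simp_all add: principal_delete_def submatrix_index dim_submatrix pick_UNIV)

lemma rank_nullity_padded_kernel:
  assumes "A \<in> carrier_mat n n"
  shows "fs.dim {x \<in> padded_kernel A \<alpha>. mult_mat_fun A x = 0}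
    + fs.dim (mult_mat_fun A ` padded_kernel A \<alpha>) = fs.dim (padded_kernel A \<alpha>)"
  using assms funs_below_subset_span[of n]
  by (intro fs_pair.dim_kernel_add_dim_image[OF linear_mult_mat_fun subspace_padded_kernel,
        of "unit_fun ` {..<n}"]) (auto simp: padded_kernel_def)

lemma P_set_iff_dim_padded_kernel:
  assumes "A \<in> carrier_mat n n" "finite \<alpha>"
  shows "P_set A \<alpha> \<longleftrightarrow> fs.dim (padded_kernel A \<alpha>) = fs.dim (padded_kernel A {}) + card \<alpha>"
  using nullity_principal_delete[OF assms] nullity_principal_delete[OF assms(1), of "{}"]
  by (simp add: P_set_def principal_delete_empty)

lemma P_set_iff_kernel_subset:
  assumes A: "A \<in> carrier_mat n n" and \<alpha>: "\<alpha> \<subseteq> {0..<n}"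
  shows "P_set A \<alpha> \<longleftrightarrow> padded_kernel A {} \<subseteq> padded_kernel A \<alpha> \<and>
    unit_fun ` \<alpha> \<subseteq> mult_mat_fun A ` padded_kernel A \<alpha>"
proof -
  define Z N where "Z = padded_kernel A \<alpha>" and "N = padded_kernel A {}"
  define K where "K = {x \<in> Z. mult_mat_fun A x = 0}"
  let ?f = "mult_mat_fun A" and ?E = "unit_fun ` \<alpha>"
  have fin: "finite \<alpha>"
    using \<alpha> finite_subset by blast
  have card_E: "card ?E = card \<alpha>"
    using card_image inj_on_subset[OF inj_unit_fun] by blast
  have N_span: "N \<subseteq> fs.span (unit_fun ` {..<n})"
    using A funs_below_subset_span by (auto simp: N_def padded_kernel_def)
  have Z: "fs.subspace Z"
    by (simp add: Z_def subspace_padded_kernel)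
  have K: "fs.subspace K"
    using fs.subspace_inter[OF Z fs_pair.linear_subspace_kernel[OF linear_mult_mat_fun]]
    by (simp add: K_def Collect_conj_eq)
  have K_N: "K \<subseteq> N"
    by (auto simp: K_def Z_def N_def padded_kernel_def)
  have image_E: "?f ` Z \<subseteq> fs.span ?E"
    using mult_mat_fun_padded_kernel_in_span fin by (auto simp: Z_def)
  have rank_nullity: "fs.dim K + fs.dim (?f ` Z) = fs.dim Z"
    unfolding K_def Z_def by (rule rank_nullity_padded_kernel[OF A])
  have dim_K: "fs.dim K \<le> fs.dim N"
    using K_N N_span by (rule fs.dim_subset_span_finite) simp
  have dim_image: "fs.dim (?f ` Z) \<le> card \<alpha>"
    using fs.dim_le_card[OF image_E] fin card_E by simp
  have P_set: "P_set A \<alpha> \<longleftrightarrow> fs.dim Z = fs.dim N + card \<alpha>"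
    unfolding Z_def N_def by (rule P_set_iff_dim_padded_kernel[OF A fin])
  show ?thesis
    unfolding Z_def[symmetric] N_def[symmetric]
  proof
    assume "P_set A \<alpha>"
    then have dims: "fs.dim N \<le> fs.dim K" "fs.dim (fs.span ?E) \<le> fs.dim (?f ` Z)"
      using P_set rank_nullity dim_K dim_image fs.dim_le_card'[of ?E] fin card_E by auto
    have "N \<subseteq> K"
      by (rule fs.subset_subspace_if_dim_le[OF K K_N N_span _ dims(1)]) simp
    moreover have "fs.span ?E \<subseteq> ?f ` Z"
      by (rule fs.subset_subspace_if_dim_le[OF fs_pair.linear_subspace_image[OF linear_mult_mat_fun Z]
            image_E order_refl _ dims(2)]) (use fin in simp)
    ultimately show "N \<subseteq> Z \<and> ?E \<subseteq> ?f ` Z"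
      using fs.span_superset[of ?E] by (auto simp: K_def)
  next
    assume "N \<subseteq> Z \<and> ?E \<subseteq> ?f ` Z"
    then have "K = N" and "fs.dim (?f ` Z) = card \<alpha>"
      using K_N fs.dim_unique[OF _ image_E independent_unit_fun card_E]
      by (auto simp: K_def N_def padded_kernel_def)
    then show "P_set A \<alpha>"
      using P_set rank_nullity by simp
  qed
qed

definition unit_preimages_vanish :: "real mat \<Rightarrow> nat \<Rightarrow> nat \<Rightarrow> bool" where
  "unit_preimages_vanish A i j \<longleftrightarrow>
     (\<exists>y \<in> funs_below (dim_col A). mult_mat_fun A y = unit_fun i) \<and>
     (\<forall>y \<in> funs_below (dim_col A). mult_mat_fun A y = unit_fun i \<longrightarrow> y j = 0)"

lemma unit_preimages_vanishD:
  assumes "unit_preimages_vanish A i j"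
  obtains y where "y \<in> funs_below (dim_col A)" "mult_mat_fun A y = unit_fun i"
    and "\<And>y. y \<in> funs_below (dim_col A) \<Longrightarrow> mult_mat_fun A y = unit_fun i \<Longrightarrow> y j = 0"
  using assms unfolding unit_preimages_vanish_def by blast

lemma unit_preimages_vanish_if_kernel_subset:
  assumes N: "padded_kernel A {} \<subseteq> padded_kernel A \<alpha>"
    and E: "unit_fun ` \<alpha> \<subseteq> mult_mat_fun A ` padded_kernel A \<alpha>"
    and i: "i \<in> \<alpha>" and j: "j \<in> \<alpha>"
  shows "unit_preimages_vanish A i j"
proof -
  have "unit_fun i \<in> mult_mat_fun A ` padded_kernel A \<alpha>"
    using E i by blast
  then obtain z where z: "z \<in> padded_kernel A \<alpha>" "mult_mat_fun A z = unit_fun i"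
    by (metis imageE)
  have "y j = 0" if y: "y \<in> funs_below (dim_col A)" "mult_mat_fun A y = unit_fun i" for y
  proof -
    have "y - z \<in> padded_kernel A {}"
      using y z(1) by (simp add: padded_kernel_def funs_below_def mult_mat_fun_diff z(2))
    then have "y - z \<in> padded_kernel A \<alpha>"
      using N by blast
    then show ?thesis
      using z(1) j by (simp add: padded_kernel_def)
  qed
  moreover have "z \<in> funs_below (dim_col A)"
    using z(1) by (simp add: padded_kernel_def)
  ultimately show ?thesis
    using z(2) unfolding unit_preimages_vanish_def by blast
qed

lemma kernel_subset_if_unit_preimages_vanish:
  assumes vanish: "\<forall>i\<in>\<alpha>. \<forall>j\<in>\<alpha>. unit_preimages_vanish A i j"
  shows "padded_kernel A {} \<subseteq> padded_kernel A \<alpha>"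
    and "unit_fun ` \<alpha> \<subseteq> mult_mat_fun A ` padded_kernel A \<alpha>"
proof
  fix x assume x: "x \<in> padded_kernel A {}"
  have x': "mult_mat_fun A x = 0" "x \<in> funs_below (dim_col A)"
    using x by (auto simp: padded_kernel_def)
  have "x j = 0" if j: "j \<in> \<alpha>" for j
  proof -
    obtain y where y: "y \<in> funs_below (dim_col A)" "mult_mat_fun A y = unit_fun j"
      and preimage: "\<And>y. y \<in> funs_below (dim_col A) \<Longrightarrow> mult_mat_fun A y = unit_fun j \<Longrightarrow> y j = 0"
      using vanish j by (blast elim: unit_preimages_vanishD)
    have "y + x \<in> funs_below (dim_col A)"
      using y(1) x'(2) by (simp add: funs_below_def)
    moreover have "mult_mat_fun A (y + x) = unit_fun j"
      using y(2) x'(1) by (simp add: mult_mat_fun_add)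
    ultimately have "(y + x) j = 0"
      by (rule preimage)
    then show ?thesis
      using preimage[OF y] by simp
  qed
  then show "x \<in> padded_kernel A \<alpha>"
    using x by (simp add: padded_kernel_def)
next
  show "unit_fun ` \<alpha> \<subseteq> mult_mat_fun A ` padded_kernel A \<alpha>"
  proof (rule image_subsetI)
    fix i assume i: "i \<in> \<alpha>"
    obtain y where y: "y \<in> funs_below (dim_col A)" "mult_mat_fun A y = unit_fun i"
      and preimage: "\<And>j y. j \<in> \<alpha> \<Longrightarrow> y \<in> funs_below (dim_col A) \<Longrightarrow>
        mult_mat_fun A y = unit_fun i \<Longrightarrow> y j = 0"
      using vanish i unfolding unit_preimages_vanish_def by blast
    have "y \<in> padded_kernel A \<alpha>"
      using y preimage[OF _ y] i by (simp add: padded_kernel_def unit_fun_def)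
    then show "unit_fun i \<in> mult_mat_fun A ` padded_kernel A \<alpha>"
      unfolding y(2)[symmetric] by (rule imageI)
  qed
qed

lemma P_set_iff_unit_preimages_vanish:
  assumes "A \<in> carrier_mat n n" "\<alpha> \<subseteq> {0..<n}"
  shows "P_set A \<alpha> \<longleftrightarrow> (\<forall>i\<in>\<alpha>. \<forall>j\<in>\<alpha>. unit_preimages_vanish A i j)"
  unfolding P_set_iff_kernel_subset[OF assms]
proof
  assume "padded_kernel A {} \<subseteq> padded_kernel A \<alpha> \<and>
    unit_fun ` \<alpha> \<subseteq> mult_mat_fun A ` padded_kernel A \<alpha>"
  then show "\<forall>i\<in>\<alpha>. \<forall>j\<in>\<alpha>. unit_preimages_vanish A i j"
    by (auto intro: unit_preimages_vanish_if_kernel_subset)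
next
  assume "\<forall>i\<in>\<alpha>. \<forall>j\<in>\<alpha>. unit_preimages_vanish A i j"
  from kernel_subset_if_unit_preimages_vanish[OF this]
  show "padded_kernel A {} \<subseteq> padded_kernel A \<alpha> \<and>
    unit_fun ` \<alpha> \<subseteq> mult_mat_fun A ` padded_kernel A \<alpha>" ..
qed

lemma ball_ball_iff_two_element_subsets:
  assumes "2 \<le> card S"
  shows "(\<forall>i\<in>S. \<forall>j\<in>S. R i j) \<longleftrightarrow> (\<forall>T. T \<subseteq> S \<and> card T = 2 \<longrightarrow> (\<forall>i\<in>T. \<forall>j\<in>T. R i j))"
proof (intro iffI allI impI ballI)
  fix i j assume pairs: "\<forall>T. T \<subseteq> S \<and> card T = 2 \<longrightarrow> (\<forall>i\<in>T. \<forall>j\<in>T. R i j)"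
    and i: "i \<in> S" and j: "j \<in> S"
  have "card (S - {i}) \<noteq> 0"
    using assms i by (simp add: card_Diff_singleton_if)
  then have "S - {i} \<noteq> {}"
    by (metis card.empty)
  then obtain k where k: "k \<in> S" "k \<noteq> i"
    by blast
  show "R i j"
  proof (cases "i = j")
    case True
    show ?thesis
      by (rule pairs[rule_format, of "{i, k}"]) (use i k True in auto)
  next
    case False
    show ?thesis
      by (rule pairs[rule_format, of "{i, j}"]) (use i j False in auto)
  qed
qed auto

theorem theorem2p5:
  fixes A :: "real mat" and n :: nat and \<alpha> :: "nat set"
  assumes "A \<in> carrier_mat n n"
    and "A\<^sup>T = A"
    and "\<alpha> \<subseteq> {0..<n}"
    and "card \<alpha> \<ge> 2"
  shows "P_set A \<alpha> \<longleftrightarrow> (\<forall>\<gamma>. \<gamma> \<subseteq> \<alpha> \<and> card \<gamma> = 2 \<longrightarrow> P_set A \<gamma>)"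
proof -
  have P_set_iff: "P_set A \<gamma> \<longleftrightarrow> (\<forall>i\<in>\<gamma>. \<forall>j\<in>\<gamma>. unit_preimages_vanish A i j)" if "\<gamma> \<subseteq> \<alpha>" for \<gamma>
    using that assms(3) by (intro P_set_iff_unit_preimages_vanish[OF assms(1)]) (rule order_trans)
  have "P_set A \<alpha> \<longleftrightarrow> (\<forall>i\<in>\<alpha>. \<forall>j\<in>\<alpha>. unit_preimages_vanish A i j)"
    by (rule P_set_iff) simp
  also have "\<dots> \<longleftrightarrow> (\<forall>\<gamma>. \<gamma> \<subseteq> \<alpha> \<and> card \<gamma> = 2 \<longrightarrow> (\<forall>i\<in>\<gamma>. \<forall>j\<in>\<gamma>. unit_preimages_vanish A i j))"
    by (rule ball_ball_iff_two_element_subsets[OF assms(4)])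
  also have "\<dots> \<longleftrightarrow> (\<forall>\<gamma>. \<gamma> \<subseteq> \<alpha> \<and> card \<gamma> = 2 \<longrightarrow> P_set A \<gamma>)"
    using P_set_iff by (intro all_cong1) blast
  finally show ?thesis .
qed

end
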